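(* Let $X$ be a countably compact non-compact space with linear Lindelöf number $\kappa\ge\omega_1$, and let $Y$ be an $[\aleph_0,\kappa]$-compact C-closed space. Then: (a) for each continuous $f:X\to Y$, $f(X)$ is compact and there is $c\in Y$ such that $f^{-1}(\{c\})$ is non-Lindelöf; (b) if $X$ satisfies $\mathsf{IC}$ and $Y$ has $G_\delta$ points, then $\mathsf{EC}(X,Y)$ holds; (c) if $X$ satisfies $\mathsf{I0}$ and $Y$ is Tychonoff with $G_\delta$ points, then $\mathsf{EC}(X,Y)$ holds.
   Context: All spaces are Hausdorff and maps continuous. The linear Lindelöf number of $X$ is the least $\kappa$ such that every cover of $X$ by open sets linearly ordered by inclusion has a subcover of cardinality $\le\kappa$. A space is $[\aleph_0,\kappa]$-compact if every open cover of cardinality $\le\kappa$ has a countable subcover. A space is C-closed if every countably compact subspace is closed. A $0$-set is $g^{-1}(\{0\})$ for a continuous $g:X\to[0,1]$. $X$ satisfies $\mathsf{IC}$ (resp. $\mathsf{I0}$) if of any two disjoint closed subsets (resp. $0$-sets) at least one is Lindelöf. For non-Lindelöf $X$, $\mathsf{EC}(X,Y)$ means: for every continuous $f:X\to Y$ there is a Lindelöf $Z\subset X$ with $f(X\setminus Z)$ a singleton. *)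

theory Defs
  imports "HOL-Analysis.Analysis" "HOL-Library.Equipollence"
begin

definition countably_compact_space :: "'a topology \<Rightarrow> bool" where
  "countably_compact_space X \<longleftrightarrow>
     (\<forall>\<U>. countable \<U> \<and> (\<forall>U\<in>\<U>. openin X U) \<and> topspace X \<subseteq> \<Union>\<U>
        \<longrightarrow> (\<exists>\<V>. finite \<V> \<and> \<V> \<subseteq> \<U> \<and> topspace X \<subseteq> \<Union>\<V>))"

definition Lindelof_in :: "'a topology \<Rightarrow> 'a set \<Rightarrow> bool" where
  "Lindelof_in X S \<longleftrightarrow> S \<subseteq> topspace X \<and> Lindelof_space (subtopology X S)"

definition linear_Lindelof_bound :: "'a topology \<Rightarrow> 'k set \<Rightarrow> bool" where
  "linear_Lindelof_bound X K \<longleftrightarrow>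
     (\<forall>\<U>. (\<forall>U\<in>\<U>. openin X U) \<and> topspace X \<subseteq> \<Union>\<U>
          \<and> (\<forall>U\<in>\<U>. \<forall>V\<in>\<U>. U \<subseteq> V \<or> V \<subseteq> U)
        \<longrightarrow> (\<exists>\<V>. \<V> \<subseteq> \<U> \<and> \<V> \<lesssim> K \<and> topspace X \<subseteq> \<Union>\<V>))"

text \<open>The linear Lindelof number of X equals |K|: |K| is the least cardinal that
  is such a bound (every smaller cardinal is represented by a subset of K).\<close>
definition linear_Lindelof_number_is :: "'a topology \<Rightarrow> 'k set \<Rightarrow> bool" where
  "linear_Lindelof_number_is X K \<longleftrightarrow>
     linear_Lindelof_bound X K \<and> (\<forall>J. J \<subseteq> K \<and> J \<prec> K \<longrightarrow> \<not> linear_Lindelof_bound X J)"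

definition aleph0_K_compact :: "'a topology \<Rightarrow> 'k set \<Rightarrow> bool" where
  "aleph0_K_compact Y K \<longleftrightarrow>
     (\<forall>\<U>. \<U> \<lesssim> K \<and> (\<forall>U\<in>\<U>. openin Y U) \<and> topspace Y \<subseteq> \<Union>\<U>
        \<longrightarrow> (\<exists>\<V>. countable \<V> \<and> \<V> \<subseteq> \<U> \<and> topspace Y \<subseteq> \<Union>\<V>))"

definition C_closed :: "'a topology \<Rightarrow> bool" where
  "C_closed Y \<longleftrightarrow>
     (\<forall>A. A \<subseteq> topspace Y \<and> countably_compact_space (subtopology Y A) \<longrightarrow> closedin Y A)"

definition zero_set_in :: "'a topology \<Rightarrow> 'a set \<Rightarrow> bool" where
  "zero_set_in X Z \<longleftrightarrow>
     (\<exists>g. continuous_map X (top_of_set {0..(1::real)}) g \<and> Z = {x \<in> topspace X. g x = 0})"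

definition IC :: "'a topology \<Rightarrow> bool" where
  "IC X \<longleftrightarrow> (\<forall>A B. closedin X A \<and> closedin X B \<and> A \<inter> B = {}
                 \<longrightarrow> Lindelof_in X A \<or> Lindelof_in X B)"

definition I0 :: "'a topology \<Rightarrow> bool" where
  "I0 X \<longleftrightarrow> (\<forall>A B. zero_set_in X A \<and> zero_set_in X B \<and> A \<inter> B = {}
                 \<longrightarrow> Lindelof_in X A \<or> Lindelof_in X B)"

definition G_delta_points :: "'a topology \<Rightarrow> bool" where
  "G_delta_points Y \<longleftrightarrow> (\<forall>y \<in> topspace Y. gdelta_in Y {y})"

definition Tychonoff_space :: "'a topology \<Rightarrow> bool" where
  "Tychonoff_space Y \<longleftrightarrow> completely_regular_space Y \<and> Hausdorff_space Y"

definition EC :: "'a topology \<Rightarrow> 'b topology \<Rightarrow> bool" where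
  "EC X Y \<longleftrightarrow> (\<forall>f. continuous_map X Y f \<longrightarrow>
       (\<exists>Z. Lindelof_in X Z \<and> (\<exists>c. f ` (topspace X - Z) = {c})))"

end

theory Submission
  imports Defs
begin

(* Compactness of f(X): pull a chain of open sets covering f(X) back to a chain cover of X.
  The linear Lindelof bound leaves at most kappa members; f(X) is countably compact, hence closed
  because Y is C-closed, so [aleph_0, kappa]-compactness of Y leaves countably many, and countable
  compactness of X finitely many. This suffices, since a set is compact as soon as every chain
  of open sets covering it has a single member covering it.

  The non-Lindelof fibre: X is not compact, so it has an open chain cover V no member of which
  covers X. The sets f(X - V) form a chain of nonempty closed subsets of the compact set f(X),
  so they share a point c. A Lindelof closed subset of the countably compact X is compact, so a
  Lindelof fibre over c would lie in a single member V, contradicting c : f(X - V).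

  For (b) and (c): if {c} is a G_delta then Y - {c} is a countable union of closed sets C not
  containing c. By IC (for (c): I0, applied to the zero sets of a Urysohn function separating c
  from C) each preimage of such a C is Lindelof, because the fibre over c is not. So f is
  constant outside a Lindelof set. *)

section \<open>Compactness via chains of open sets\<close>

lemma chain_subset_finite_subcover_member:
  assumes "chain\<^sub>\<subseteq> \<C>" "finite \<F>" "\<F> \<subseteq> \<C>" "S \<subseteq> \<Union>\<F>" "S \<noteq> {}"
  shows "\<exists>C\<in>\<C>. S \<subseteq> C"
proof -
  have "subset.chain UNIV \<F>"
    using assms(1,3) by (auto simp: chain_subset_def subset_chain_def)
  moreover have "\<F> \<noteq> {}"
    using assms(4,5) by auto
  ultimately have "\<Union>\<F> \<in> \<F>"
    using assms(2) Union_in_chain by blast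
  then show ?thesis
    using assms(3,4) by blast
qed

lemma chain_cover_Un_openin:
  assumes chain_cover: "\<And>\<C>. \<lbrakk>\<forall>C\<in>\<C>. openin X C; chain\<^sub>\<subseteq> \<C>; S \<subseteq> \<Union>\<C>; S \<noteq> {}\<rbrakk> \<Longrightarrow> \<exists>C\<in>\<C>. S \<subseteq> C"
    and \<C>: "\<forall>C\<in>\<C>. openin X C" "chain\<^sub>\<subseteq> \<C>" and W: "openin X W"
    and cover: "S \<subseteq> \<Union>\<C> \<union> W" and nonempty: "S \<noteq> {}"
  shows "S \<subseteq> W \<or> (\<exists>C\<in>\<C>. S \<subseteq> C \<union> W)"
proof -
  define \<D> where "\<D> = insert W ((\<lambda>C. C \<union> W) ` \<C>)"
  have "\<forall>D\<in>\<D>. openin X D"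
    using \<C>(1) W by (auto simp: \<D>_def)
  moreover have "chain\<^sub>\<subseteq> \<D>"
    using \<C>(2) by (auto simp: \<D>_def chain_subset_def)
  moreover have "S \<subseteq> \<Union>\<D>"
    using cover by (auto simp: \<D>_def)
  ultimately have "\<exists>D\<in>\<D>. S \<subseteq> D"
    using nonempty by (rule chain_cover)
  then show ?thesis
    by (auto simp: \<D>_def)
qed

(* Zorn: a maximal open V such that no finite subfamily of U covers S together with V must
  contain every member of U, which is absurd. *)
lemma compactin_chain_coverI:
  assumes S: "S \<subseteq> topspace X"
    and chain_cover: "\<And>\<C>. \<lbrakk>\<forall>C\<in>\<C>. openin X C; chain\<^sub>\<subseteq> \<C>; S \<subseteq> \<Union>\<C>; S \<noteq> {}\<rbrakk> \<Longrightarrow> \<exists>C\<in>\<C>. S \<subseteq> C"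
  shows "compactin X S"
proof (rule ccontr)
  assume "\<not> compactin X S"
  then obtain \<U> where \<U>: "\<forall>U\<in>\<U>. openin X U" "S \<subseteq> \<Union>\<U>"
    and no_subcover: "\<And>\<F>. finite \<F> \<Longrightarrow> \<F> \<subseteq> \<U> \<Longrightarrow> \<not> S \<subseteq> \<Union>\<F>"
    using S by (auto simp: compactin_def)
  have nonempty: "S \<noteq> {}"
    using no_subcover[of "{}"] by auto
  define \<A> where "\<A> = {V. openin X V \<and> (\<forall>\<F>. finite \<F> \<and> \<F> \<subseteq> \<U> \<longrightarrow> \<not> S \<subseteq> V \<union> \<Union>\<F>)}"
  have "\<Union>\<C> \<in> \<A>" if "\<C> \<in> chains \<A>" for \<C>
  proof -
    have \<C>: "\<forall>C\<in>\<C>. openin X C" "chain\<^sub>\<subseteq> \<C>" "\<C> \<subseteq> \<A>"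
      using that by (auto simp: chains_def \<A>_def)
    have "\<not> S \<subseteq> \<Union>\<C> \<union> \<Union>\<F>" if \<F>: "finite \<F>" "\<F> \<subseteq> \<U>" for \<F>
    proof
      assume "S \<subseteq> \<Union>\<C> \<union> \<Union>\<F>"
      moreover have "openin X (\<Union>\<F>)"
        using \<F>(2) \<U>(1) by blast
      ultimately have "S \<subseteq> \<Union>\<F> \<or> (\<exists>C\<in>\<C>. S \<subseteq> C \<union> \<Union>\<F>)"
        using chain_cover_Un_openin[OF chain_cover \<C>(1,2)] nonempty by blast
      then show False
        using no_subcover \<F> \<C>(3) unfolding \<A>_def by blast
    qed
    moreover have "openin X (\<Union>\<C>)"
      using \<C>(1) by blast
    ultimately show ?thesis
      by (auto simp: \<A>_def)
  qed
  then have "\<exists>M\<in>\<A>. \<forall>V\<in>\<A>. M \<subseteq> V \<longrightarrow> V = M"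
    by (intro Zorn_Lemma ballI)
  then obtain M where M: "M \<in> \<A>" and maximal: "\<And>V. V \<in> \<A> \<Longrightarrow> M \<subseteq> V \<Longrightarrow> V = M"
    by blast
  have "U \<subseteq> M" if "U \<in> \<U>" for U
  proof -
    have "\<not> S \<subseteq> (M \<union> U) \<union> \<Union>\<F>" if "finite \<F>" "\<F> \<subseteq> \<U>" for \<F>
    proof -
      have "\<not> S \<subseteq> M \<union> \<Union>(insert U \<F>)"
        using M \<open>U \<in> \<U>\<close> that unfolding \<A>_def by blast
      then show ?thesis
        by (simp add: sup_assoc)
    qed
    then have "M \<union> U \<in> \<A>"
      using M \<U>(1) that by (auto simp: \<A>_def)
    then show ?thesis
      using maximal by blast
  qed
  then have "S \<subseteq> M \<union> \<Union>{}"
    using \<U>(2) by blast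
  then show False
    using M by (auto simp: \<A>_def)
qed

lemma compactin_iff_chain_cover:
  "compactin X S \<longleftrightarrow> S \<subseteq> topspace X \<and>
     (\<forall>\<C>. (\<forall>C\<in>\<C>. openin X C) \<and> chain\<^sub>\<subseteq> \<C> \<and> S \<subseteq> \<Union>\<C> \<and> S \<noteq> {} \<longrightarrow> (\<exists>C\<in>\<C>. S \<subseteq> C))"
proof
  assume S: "compactin X S"
  have "\<exists>C\<in>\<C>. S \<subseteq> C"
    if \<C>: "\<forall>C\<in>\<C>. openin X C" "chain\<^sub>\<subseteq> \<C>" "S \<subseteq> \<Union>\<C>" "S \<noteq> {}" for \<C>
  proof -
    obtain \<F> where "finite \<F>" "\<F> \<subseteq> \<C>" "S \<subseteq> \<Union>\<F>"
      using S \<C>(1,3) unfolding compactin_def by meson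
    then show ?thesis
      using \<C>(2,4) chain_subset_finite_subcover_member by blast
  qed
  then show "S \<subseteq> topspace X \<and>
     (\<forall>\<C>. (\<forall>C\<in>\<C>. openin X C) \<and> chain\<^sub>\<subseteq> \<C> \<and> S \<subseteq> \<Union>\<C> \<and> S \<noteq> {} \<longrightarrow> (\<exists>C\<in>\<C>. S \<subseteq> C))"
    using S compactin_subset_topspace by blast
qed (intro compactin_chain_coverI; blast)

lemma not_compact_space_chain_cover:
  assumes "\<not> compact_space X"
  obtains \<V> where "\<forall>V\<in>\<V>. openin X V" "chain\<^sub>\<subseteq> \<V>" "topspace X \<subseteq> \<Union>\<V>"
    and "topspace X \<noteq> {}" and "\<forall>V\<in>\<V>. \<not> topspace X \<subseteq> V"
proof -
  have "\<exists>\<V>. (\<forall>V\<in>\<V>. openin X V) \<and> chain\<^sub>\<subseteq> \<V> \<and> topspace X \<subseteq> \<Union>\<V> \<and> topspace X \<noteq> {}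
          \<and> (\<forall>V\<in>\<V>. \<not> topspace X \<subseteq> V)"
    using assms unfolding compact_space_def compactin_iff_chain_cover by auto
  with that show thesis
    by blast
qed

lemma compactin_Inter_chain:
  assumes "compactin X S" "\<forall>C\<in>\<C>. closedin X C" "chain\<^sub>\<subseteq> \<C>"
    and "\<forall>C\<in>\<C>. S \<inter> C \<noteq> {}" "S \<noteq> {}"
  shows "S \<inter> \<Inter>\<C> \<noteq> {}"
proof -
  have "S \<inter> \<Inter>\<F> \<noteq> {}" if "finite \<F>" "\<F> \<subseteq> \<C>" for \<F>
  proof (cases "\<F> = {}")
    case False
    have "subset.chain UNIV \<F>"
      using assms(3) that(2) by (auto simp: chain_subset_def subset_chain_def)
    then have "\<Inter>\<F> \<in> \<F>"
      using Inter_in_chain False that(1) by blast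
    then show ?thesis
      using assms(4) that(2) by auto
  qed (use assms(5) in simp)
  moreover have "(\<forall>C\<in>\<C>. closedin X C) \<and> (\<forall>\<F>. finite \<F> \<and> \<F> \<subseteq> \<C> \<longrightarrow> S \<inter> \<Inter>\<F> \<noteq> {})
      \<longrightarrow> S \<inter> \<Inter>\<C> \<noteq> {}"
    using assms(1) unfolding compactin_fip by blast
  ultimately show ?thesis
    using assms(2) by blast
qed

section \<open>Countable compactness\<close>

lemma countably_compact_spaceD:
  assumes "countably_compact_space X" "countable \<U>" "\<forall>U\<in>\<U>. openin X U" "topspace X \<subseteq> \<Union>\<U>"
  obtains \<V> where "finite \<V>" "\<V> \<subseteq> \<U>" "topspace X \<subseteq> \<Union>\<V>"
  using assms unfolding countably_compact_space_def by meson

lemma countably_compact_space_subtopologyI: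
  assumes S: "S \<subseteq> topspace X"
    and covers: "\<And>\<U>. \<lbrakk>countable \<U>; \<forall>U\<in>\<U>. openin X U; S \<subseteq> \<Union>\<U>\<rbrakk> \<Longrightarrow> \<exists>\<V>. finite \<V> \<and> \<V> \<subseteq> \<U> \<and> S \<subseteq> \<Union>\<V>"
  shows "countably_compact_space (subtopology X S)"
  unfolding countably_compact_space_def
proof (intro allI impI)
  fix \<U>
  assume \<U>: "countable \<U> \<and> (\<forall>U\<in>\<U>. openin (subtopology X S) U) \<and> topspace (subtopology X S) \<subseteq> \<Union>\<U>"
  then have "\<forall>U\<in>\<U>. \<exists>T. openin X T \<and> T \<inter> S = U"
    by (metis openin_subtopology)
  then obtain g where g: "\<And>U. U \<in> \<U> \<Longrightarrow> openin X (g U) \<and> g U \<inter> S = U"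
    by metis
  then have g_open: "\<forall>V\<in>g ` \<U>. openin X V"
    and g_trace: "\<And>U. U \<in> \<U> \<Longrightarrow> U \<subseteq> g U \<and> g U \<inter> S \<subseteq> U"
    by auto
  have "S \<subseteq> \<Union>\<U>"
    using \<U> S by (simp add: Int_absorb1)
  then have "S \<subseteq> \<Union>(g ` \<U>)"
    using g_trace by blast
  moreover have "countable (g ` \<U>)"
    using \<U> by simp
  ultimately have "\<exists>\<V>. finite \<V> \<and> \<V> \<subseteq> g ` \<U> \<and> S \<subseteq> \<Union>\<V>"
    using g_open by (intro covers)
  then obtain \<V> where \<V>: "finite \<V>" "\<V> \<subseteq> g ` \<U>" "S \<subseteq> \<Union>\<V>"
    by blast
  then obtain \<F> where \<F>: "finite \<F>" "\<F> \<subseteq> \<U>" "\<V> = g ` \<F>"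
    by (meson finite_subset_image)
  have "S \<subseteq> \<Union>\<F>"
    using \<V>(3) \<F> g_trace by blast
  then have "topspace (subtopology X S) \<subseteq> \<Union>\<F>"
    by (simp add: Int_absorb1 S)
  with \<F> show "\<exists>\<V>. finite \<V> \<and> \<V> \<subseteq> \<U> \<and> topspace (subtopology X S) \<subseteq> \<Union>\<V>"
    by blast
qed

lemma countably_compact_space_closedin_subtopology:
  assumes X: "countably_compact_space X" and C: "closedin X C"
  shows "countably_compact_space (subtopology X C)"
proof (rule countably_compact_space_subtopologyI)
  show "C \<subseteq> topspace X"
    using C closedin_subset by blast
  fix \<U> assume \<U>: "countable \<U>" "\<forall>U\<in>\<U>. openin X U" "C \<subseteq> \<Union>\<U>"
  obtain \<V> where \<V>: "finite \<V>" "\<V> \<subseteq> insert (topspace X - C) \<U>" "topspace X \<subseteq> \<Union>\<V>"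
  proof (rule countably_compact_spaceD[OF X])
    show "\<forall>U\<in>insert (topspace X - C) \<U>. openin X U"
      using \<U>(2) C by auto
  qed (use \<U> in auto)
  have "C \<subseteq> \<Union>(\<V> - {topspace X - C})"
    using \<V>(3) \<open>C \<subseteq> topspace X\<close> by blast
  moreover have "finite (\<V> - {topspace X - C})" "\<V> - {topspace X - C} \<subseteq> \<U>"
    using \<V>(1,2) by auto
  ultimately show "\<exists>\<V>. finite \<V> \<and> \<V> \<subseteq> \<U> \<and> C \<subseteq> \<Union>\<V>"
    by blast
qed

lemma countably_compact_image_cover:
  assumes X: "countably_compact_space X" and f: "continuous_map X Y f"
    and \<U>: "countable \<U>" "\<forall>U\<in>\<U>. openin Y U" "f ` topspace X \<subseteq> \<Union>\<U>"
  shows "\<exists>\<V>. finite \<V> \<and> \<V> \<subseteq> \<U> \<and> f ` topspace X \<subseteq> \<Union>\<V>"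
proof -
  define P where "P U = {x \<in> topspace X. f x \<in> U}" for U
  obtain \<W> where \<W>: "finite \<W>" "\<W> \<subseteq> P ` \<U>" "topspace X \<subseteq> \<Union>\<W>"
  proof (rule countably_compact_spaceD[OF X])
    show "\<forall>W\<in>P ` \<U>. openin X W"
      using \<U>(2) openin_continuous_map_preimage[OF f] by (auto simp: P_def)
    show "topspace X \<subseteq> \<Union>(P ` \<U>)"
      using \<U>(3) by (auto simp: P_def)
  qed (use \<U>(1) in blast)
  then obtain \<V> where \<V>: "finite \<V>" "\<V> \<subseteq> \<U>" "\<W> = P ` \<V>"
    by (meson finite_subset_image)
  then have "f ` topspace X \<subseteq> \<Union>\<V>"
    using \<W>(3) by (auto simp: P_def)
  with \<V> show ?thesis
    by blast
qed

lemma countably_compact_space_image: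
  assumes "countably_compact_space X" "continuous_map X Y f"
  shows "countably_compact_space (subtopology Y (f ` topspace X))"
proof (rule countably_compact_space_subtopologyI)
  show "f ` topspace X \<subseteq> topspace Y"
    using assms(2) by (rule continuous_map_image_subset_topspace)
qed (rule countably_compact_image_cover[OF assms])

lemma C_closed_closedin_image:
  assumes Y: "C_closed Y" and X: "countably_compact_space X"
    and f: "continuous_map X Y f" and C: "closedin X C"
  shows "closedin Y (f ` C)"
proof -
  have "countably_compact_space (subtopology Y (f ` topspace (subtopology X C)))"
    using countably_compact_space_closedin_subtopology[OF X C] continuous_map_from_subtopology[OF f]
    by (rule countably_compact_space_image)
  moreover have "topspace (subtopology X C) = C"
    using closedin_subset[OF C] by (rule topspace_subtopology_subset)
  ultimately have "countably_compact_space (subtopology Y (f ` C))"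
    by simp
  moreover have "f ` C \<subseteq> topspace Y"
    using closedin_subset[OF C] continuous_map_image_subset_topspace[OF f] by blast
  ultimately show ?thesis
    using Y by (simp add: C_closed_def)
qed

lemma countably_compact_Lindelof_imp_compact_space:
  assumes "countably_compact_space X" "Lindelof_space X"
  shows "compact_space X"
  unfolding compact_space_alt
proof (intro allI impI)
  fix \<U> assume \<U>: "(\<forall>U\<in>\<U>. openin X U) \<and> topspace X \<subseteq> \<Union>\<U>"
  then obtain \<V> where \<V>: "countable \<V>" "\<V> \<subseteq> \<U>" "topspace X \<subseteq> \<Union>\<V>"
    using assms(2) unfolding Lindelof_space_alt by meson
  have "\<forall>V\<in>\<V>. openin X V"
    using \<U> \<V>(2) by blast
  then obtain \<F> where "finite \<F>" "\<F> \<subseteq> \<V>" "topspace X \<subseteq> \<Union>\<F>"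
    by (rule countably_compact_spaceD[OF assms(1) \<V>(1) _ \<V>(3)])
  with \<V>(2) show "\<exists>\<F>. finite \<F> \<and> \<F> \<subseteq> \<U> \<and> topspace X \<subseteq> \<Union>\<F>"
    by blast
qed

lemma compactin_closedin_Lindelof:
  assumes "countably_compact_space X" "closedin X F" "Lindelof_in X F"
  shows "compactin X F"
proof -
  have "compact_space (subtopology X F)"
    using countably_compact_space_closedin_subtopology[OF assms(1,2)] assms(3)
    unfolding Lindelof_in_def by (blast intro: countably_compact_Lindelof_imp_compact_space)
  then show ?thesis
    using assms(3) by (simp add: compactin_subspace Lindelof_in_def)
qed

section \<open>Compact images and non-Lindelof fibres\<close>

lemma linear_Lindelof_bound_image_cover:
  assumes LL: "linear_Lindelof_bound X K" and f: "continuous_map X Y f"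
    and \<C>: "\<forall>C\<in>\<C>. openin Y C" "chain\<^sub>\<subseteq> \<C>" "f ` topspace X \<subseteq> \<Union>\<C>"
  obtains \<C>' where "\<C>' \<subseteq> \<C>" "\<C>' \<lesssim> K" "f ` topspace X \<subseteq> \<Union>\<C>'"
proof -
  define P where "P C = {x \<in> topspace X. f x \<in> C}" for C
  have "\<forall>U\<in>P ` \<C>. openin X U"
    using \<C>(1) openin_continuous_map_preimage[OF f] by (auto simp: P_def)
  moreover have "topspace X \<subseteq> \<Union>(P ` \<C>)"
    using \<C>(3) by (auto simp: P_def)
  moreover have "chain\<^sub>\<subseteq> (P ` \<C>)"
    using \<C>(2) by (auto simp: chain_subset_def P_def)
  ultimately have "\<exists>\<V>. \<V> \<subseteq> P ` \<C> \<and> \<V> \<lesssim> K \<and> topspace X \<subseteq> \<Union>\<V>"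
    using LL[unfolded linear_Lindelof_bound_def, folded chain_subset_def, THEN spec[of _ "P ` \<C>"]]
    by blast
  then obtain \<C>' where \<C>': "\<C>' \<subseteq> \<C>" "inj_on P \<C>'" "P ` \<C>' \<lesssim> K" "topspace X \<subseteq> \<Union>(P ` \<C>')"
    unfolding subset_image_inj by blast
  show thesis
  proof
    show "\<C>' \<subseteq> \<C>"
      by (fact \<C>'(1))
    show "\<C>' \<lesssim> K"
      using \<C>'(3) inj_on_image_lepoll_1[OF \<C>'(2)] by blast
    show "f ` topspace X \<subseteq> \<Union>\<C>'"
      using \<C>'(4) by (auto simp: P_def)
  qed
qed

lemma aleph0_K_compact_closedin_cover:
  assumes Y: "aleph0_K_compact Y K" and S: "closedin Y S"
    and \<U>: "\<U> \<lesssim> K" "\<forall>U\<in>\<U>. openin Y U" "S \<subseteq> \<Union>\<U>"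
  obtains \<V> where "countable \<V>" "\<V> \<subseteq> \<U>" "S \<subseteq> \<Union>\<V>"
\<comment> \<open>Each member is enlarged by the open set \<open>topspace Y - S\<close> instead of adding that set as a
  new member, which could exceed the cardinality bound when \<open>K\<close> is finite.\<close>
proof (cases "\<U> = {}")
  case True
  with \<U>(3) show thesis
    using that[of "{}"] by simp
next
  case False
  define E where "E U = U \<union> (topspace Y - S)" for U
  have "E ` \<U> \<lesssim> K"
    using image_lepoll \<U>(1) by (rule lepoll_trans)
  moreover have "\<forall>V\<in>E ` \<U>. openin Y V"
    using \<U>(2) S by (auto simp: E_def)
  moreover have "topspace Y \<subseteq> \<Union>(E ` \<U>)"
    using \<U>(3) False by (auto simp: E_def)
  ultimately have "\<exists>\<D>. countable \<D> \<and> \<D> \<subseteq> E ` \<U> \<and> topspace Y \<subseteq> \<Union>\<D>"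
    using Y[unfolded aleph0_K_compact_def, THEN spec[of _ "E ` \<U>"]] by blast
  then obtain \<V> where \<V>: "countable \<V>" "\<V> \<subseteq> \<U>" "topspace Y \<subseteq> \<Union>(E ` \<V>)"
    by (metis countable_subset_image)
  have "S \<subseteq> \<Union>\<V>"
    using \<V>(3) closedin_subset[OF S] unfolding E_def by blast
  with \<V>(1,2) show thesis
    by (rule that)
qed

lemma compactin_image_linear_Lindelof:
  assumes X: "countably_compact_space X" "linear_Lindelof_bound X K"
    and Y: "aleph0_K_compact Y K" "C_closed Y"
    and f: "continuous_map X Y f"
  shows "compactin Y (f ` topspace X)"
  unfolding compactin_iff_chain_cover
proof (intro conjI allI impI)
  show "f ` topspace X \<subseteq> topspace Y"
    using f by (rule continuous_map_image_subset_topspace)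
  have closed: "closedin Y (f ` topspace X)"
    using C_closed_closedin_image[OF Y(2) X(1) f closedin_topspace] .
  fix \<C>
  assume "(\<forall>C\<in>\<C>. openin Y C) \<and> chain\<^sub>\<subseteq> \<C> \<and> f ` topspace X \<subseteq> \<Union>\<C> \<and> f ` topspace X \<noteq> {}"
  then have \<C>: "\<forall>C\<in>\<C>. openin Y C" "chain\<^sub>\<subseteq> \<C>" "f ` topspace X \<subseteq> \<Union>\<C>"
    and nonempty: "f ` topspace X \<noteq> {}"
    by blast+
  obtain \<C>\<^sub>1 where \<C>\<^sub>1: "\<C>\<^sub>1 \<subseteq> \<C>" "\<C>\<^sub>1 \<lesssim> K" "f ` topspace X \<subseteq> \<Union>\<C>\<^sub>1"
    by (rule linear_Lindelof_bound_image_cover[OF X(2) f \<C>])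
  then have "\<forall>C\<in>\<C>\<^sub>1. openin Y C"
    using \<C>(1) by blast
  then obtain \<C>\<^sub>2 where \<C>\<^sub>2: "countable \<C>\<^sub>2" "\<C>\<^sub>2 \<subseteq> \<C>\<^sub>1" "f ` topspace X \<subseteq> \<Union>\<C>\<^sub>2"
    by (rule aleph0_K_compact_closedin_cover[OF Y(1) closed \<C>\<^sub>1(2) _ \<C>\<^sub>1(3)])
  have "\<forall>C\<in>\<C>\<^sub>2. openin Y C"
    using \<C>(1) \<C>\<^sub>1(1) \<C>\<^sub>2(2) by blast
  then obtain \<F> where \<F>: "finite \<F>" "\<F> \<subseteq> \<C>\<^sub>2" "f ` topspace X \<subseteq> \<Union>\<F>"
    using countably_compact_image_cover[OF X(1) f \<C>\<^sub>2(1) _ \<C>\<^sub>2(3)] by blast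
  have "\<F> \<subseteq> \<C>"
    using \<F>(2) \<C>\<^sub>2(2) \<C>\<^sub>1(1) by blast
  then show "\<exists>C\<in>\<C>. f ` topspace X \<subseteq> C"
    using chain_subset_finite_subcover_member[OF \<C>(2) \<F>(1) _ \<F>(3) nonempty] by blast
qed

lemma non_Lindelof_fibre:
  assumes X: "countably_compact_space X" "\<not> compact_space X"
    and Y: "t1_space Y" "C_closed Y"
    and f: "continuous_map X Y f" and image: "compactin Y (f ` topspace X)"
  shows "\<exists>c\<in>topspace Y. \<not> Lindelof_in X {x \<in> topspace X. f x = c}"
proof -
  obtain \<V> where \<V>: "\<forall>V\<in>\<V>. openin X V" "chain\<^sub>\<subseteq> \<V>" "topspace X \<subseteq> \<Union>\<V>"
    and nonempty: "topspace X \<noteq> {}" and uncovered: "\<forall>V\<in>\<V>. \<not> topspace X \<subseteq> V"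
    using not_compact_space_chain_cover[OF X(2)] by blast
  define B where "B V = f ` (topspace X - V)" for V
  have "f ` topspace X \<inter> \<Inter>(B ` \<V>) \<noteq> {}"
  proof (rule compactin_Inter_chain[OF image])
    have "closedin Y (B V)" if "V \<in> \<V>" for V
      unfolding B_def using \<V>(1) that
      by (intro C_closed_closedin_image[OF Y(2) X(1) f] closedin_diff closedin_topspace) blast
    then show "\<forall>C\<in>B ` \<V>. closedin Y C"
      by blast
    show "chain\<^sub>\<subseteq> (B ` \<V>)"
      using \<V>(2) unfolding chain_subset_def B_def by blast
    show "\<forall>C\<in>B ` \<V>. f ` topspace X \<inter> C \<noteq> {}"
      using uncovered unfolding B_def by blast
    show "f ` topspace X \<noteq> {}"
      using nonempty by simp
  qed
  then obtain c where c_image: "c \<in> f ` topspace X" and c_B: "\<And>V. V \<in> \<V> \<Longrightarrow> c \<in> B V"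
    by blast
  have c: "c \<in> topspace Y"
    using c_image continuous_map_image_subset_topspace[OF f] by blast
  define F where "F = {x \<in> topspace X. f x = c}"
  have "\<not> Lindelof_in X F"
  proof
    assume "Lindelof_in X F"
    moreover have "closedin X F"
      using closedin_continuous_map_preimage[OF f closedin_t1_singleton[OF Y(1) c]]
      by (simp add: F_def)
    ultimately have "compactin X F"
      by (rule compactin_closedin_Lindelof[OF X(1), rotated])
    moreover have "F \<subseteq> \<Union>\<V>" "F \<noteq> {}"
      using \<V>(3) c_image by (auto simp: F_def)
    ultimately obtain V where "V \<in> \<V>" "F \<subseteq> V"
      using \<V>(1,2) compactin_iff_chain_cover[THEN iffD1, THEN conjunct2, THEN spec[of _ \<V>]] by blast
    then show False
      using c_B by (auto simp: B_def F_def)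
  qed
  with c show ?thesis
    unfolding F_def by blast
qed

section \<open>Maps constant outside a Lindelof set\<close>

lemma Lindelof_in_closedin_subset:
  assumes "Lindelof_in X S" "closedin X C" "C \<subseteq> S"
  shows "Lindelof_in X C"
proof -
  have "closedin (subtopology X S) C"
    using assms closedin_subset_topspace by blast
  then have "Lindelof_space (subtopology (subtopology X S) C)"
    using assms(1) Lindelof_space_closedin_subtopology unfolding Lindelof_in_def by blast
  then show ?thesis
    using assms(2,3) closedin_subset by (auto simp: Lindelof_in_def subtopology_subtopology Int_absorb1)
qed

lemma Lindelof_in_complement_fibre:
  assumes f: "continuous_map X Y f" and c: "gdelta_in Y {c}"
    and closed_preimage: "\<And>C. closedin Y C \<Longrightarrow> c \<notin> C \<Longrightarrow> Lindelof_in X {x \<in> topspace X. f x \<in> C}"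
  shows "Lindelof_in X (topspace X - {x \<in> topspace X. f x = c})"
proof -
  obtain \<U> where \<U>: "countable \<U>" "\<forall>U\<in>\<U>. closedin Y U" "\<Union>\<U> = topspace Y - {c}"
    using c unfolding gdelta_in_fsigma_in fsigma_in_def union_of_def by auto
  define P where "P U = {x \<in> topspace X. f x \<in> U}" for U
  have "f x \<in> \<Union>\<U> \<longleftrightarrow> f x \<noteq> c" if "x \<in> topspace X" for x
    using \<U>(3) continuous_map_image_subset_topspace[OF f] that by (auto simp: image_subset_iff)
  then have "topspace X - {x \<in> topspace X. f x = c} = \<Union>(P ` \<U>)"
    by (auto simp: P_def)
  moreover have "Lindelof_space (subtopology X (\<Union>(P ` \<U>)))"
  proof (rule Lindelof_space_Union)
    show "countable (P ` \<U>)"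
      using \<U>(1) by simp
    fix V assume "V \<in> P ` \<U>"
    then obtain U where "U \<in> \<U>" "V = P U"
      by blast
    moreover have "c \<notin> U"
      using \<U>(3) \<open>U \<in> \<U>\<close> by blast
    ultimately show "Lindelof_space (subtopology X V)"
      using closed_preimage \<U>(2) by (auto simp: P_def Lindelof_in_def)
  qed
  ultimately show ?thesis
    unfolding Lindelof_in_def by (metis Diff_subset)
qed

lemma EC_if_Lindelof_preimages:
  assumes points: "G_delta_points Y"
    and fibre: "\<And>f. continuous_map X Y f \<Longrightarrow> \<exists>c\<in>topspace Y. \<not> Lindelof_in X {x \<in> topspace X. f x = c}"
    and preimage: "\<And>f C c. \<lbrakk>continuous_map X Y f; closedin Y C; c \<in> topspace Y; c \<notin> C;
                      \<not> Lindelof_in X {x \<in> topspace X. f x = c}\<rbrakk> \<Longrightarrow> Lindelof_in X {x \<in> topspace X. f x \<in> C}"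
  shows "EC X Y"
  unfolding EC_def
proof (intro allI impI)
  fix f assume f: "continuous_map X Y f"
  then obtain c where c: "c \<in> topspace Y" "\<not> Lindelof_in X {x \<in> topspace X. f x = c}"
    using fibre by blast
  have "gdelta_in Y {c}"
    using points c(1) by (simp add: G_delta_points_def)
  then have "Lindelof_in X (topspace X - {x \<in> topspace X. f x = c})"
    using preimage[OF f _ c(1) _ c(2)] by (rule Lindelof_in_complement_fibre[OF f])
  moreover have "{x \<in> topspace X. f x = c} \<noteq> {}"
  proof
    assume "{x \<in> topspace X. f x = c} = {}"
    with c(2) show False
      using Lindelof_space_topspace_empty[of "subtopology X {}"] by (simp add: Lindelof_in_def)
  qed
  then have "f ` (topspace X - (topspace X - {x \<in> topspace X. f x = c})) = {c}"
    by auto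
  ultimately show "\<exists>Z. Lindelof_in X Z \<and> (\<exists>c. f ` (topspace X - Z) = {c})"
    by blast
qed

lemma IC_Lindelof_preimage:
  assumes IC: "IC X" and f: "continuous_map X Y f"
    and A: "closedin Y A" and B: "closedin Y B" and disjoint: "A \<inter> B = {}"
    and "\<not> Lindelof_in X {x \<in> topspace X. f x \<in> A}"
  shows "Lindelof_in X {x \<in> topspace X. f x \<in> B}"
proof -
  have "closedin X {x \<in> topspace X. f x \<in> A}" "closedin X {x \<in> topspace X. f x \<in> B}"
    using closedin_continuous_map_preimage[OF f] A B by blast+
  moreover have "{x \<in> topspace X. f x \<in> A} \<inter> {x \<in> topspace X. f x \<in> B} = {}"
    using disjoint by blast
  ultimately show ?thesis
    using IC assms(6) unfolding IC_def by blast
qed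

lemma EC_if_IC:
  assumes IC: "IC X" and Y: "t1_space Y" "G_delta_points Y"
    and fibre: "\<And>f. continuous_map X Y f \<Longrightarrow> \<exists>c\<in>topspace Y. \<not> Lindelof_in X {x \<in> topspace X. f x = c}"
  shows "EC X Y"
proof (rule EC_if_Lindelof_preimages[OF Y(2) fibre])
  fix f C c
  assume f: "continuous_map X Y f" and C: "closedin Y C" and c: "c \<in> topspace Y" "c \<notin> C"
    and "\<not> Lindelof_in X {x \<in> topspace X. f x = c}"
  then have "\<not> Lindelof_in X {x \<in> topspace X. f x \<in> {c}}"
    by simp
  moreover have "{c} \<inter> C = {}"
    using c(2) by blast
  ultimately show "Lindelof_in X {x \<in> topspace X. f x \<in> C}"
    using IC_Lindelof_preimage[OF IC f closedin_t1_singleton[OF Y(1) c(1)] C] by blast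
qed

lemma I0_Lindelof_preimage:
  assumes I0: "I0 X" and Y: "completely_regular_space Y" "t1_space Y"
    and f: "continuous_map X Y f" and C: "closedin Y C" and c: "c \<in> topspace Y" "c \<notin> C"
    and fibre: "\<not> Lindelof_in X {x \<in> topspace X. f x = c}"
  shows "Lindelof_in X {x \<in> topspace X. f x \<in> C}"
proof -
  obtain g :: "_ \<Rightarrow> real" where g: "continuous_map Y (top_of_set {0..1}) g" "g c = 0" "g ` C \<subseteq> {1}"
    using Y(1) C c unfolding completely_regular_space_def by blast
  have gf: "continuous_map X (top_of_set {0..1}) (g \<circ> f)"
    using f g(1) by (rule continuous_map_compose)
  have "continuous_map (top_of_set {0..1}) (top_of_set {0..1::real}) (\<lambda>t. 1 - t)"
    by (auto simp: continuous_map_subtopology_eu intro!: continuous_intros)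
  then have gf': "continuous_map X (top_of_set {0..1}) ((\<lambda>t. 1 - t) \<circ> (g \<circ> f))"
    using gf continuous_map_compose by blast
  define Z\<^sub>0 where "Z\<^sub>0 = {x \<in> topspace X. (g \<circ> f) x = 0}"
  define Z\<^sub>1 where "Z\<^sub>1 = {x \<in> topspace X. ((\<lambda>t. 1 - t) \<circ> (g \<circ> f)) x = 0}"
  have "zero_set_in X Z\<^sub>0" "zero_set_in X Z\<^sub>1"
    unfolding zero_set_in_def Z\<^sub>0_def Z\<^sub>1_def using gf gf' by blast+
  moreover have "Z\<^sub>0 \<inter> Z\<^sub>1 = {}"
    by (auto simp: Z\<^sub>0_def Z\<^sub>1_def)
  ultimately have "Lindelof_in X Z\<^sub>0 \<or> Lindelof_in X Z\<^sub>1"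
    using I0 unfolding I0_def by blast
  moreover have "\<not> Lindelof_in X Z\<^sub>0"
  proof
    assume "Lindelof_in X Z\<^sub>0"
    moreover have "closedin X {x \<in> topspace X. f x = c}"
      using closedin_continuous_map_preimage[OF f closedin_t1_singleton[OF Y(2) c(1)]] by simp
    moreover have "{x \<in> topspace X. f x = c} \<subseteq> Z\<^sub>0"
      using g(2) by (auto simp: Z\<^sub>0_def)
    ultimately show False
      using fibre Lindelof_in_closedin_subset by blast
  qed
  moreover have "closedin X {x \<in> topspace X. f x \<in> C}"
    using closedin_continuous_map_preimage[OF f C] .
  moreover have "{x \<in> topspace X. f x \<in> C} \<subseteq> Z\<^sub>1"
    using g(3) by (auto simp: Z\<^sub>1_def)
  ultimately show ?thesis
    using Lindelof_in_closedin_subset by blast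
qed

lemma EC_if_I0:
  assumes I0: "I0 X" and Y: "Tychonoff_space Y" "G_delta_points Y"
    and fibre: "\<And>f. continuous_map X Y f \<Longrightarrow> \<exists>c\<in>topspace Y. \<not> Lindelof_in X {x \<in> topspace X. f x = c}"
  shows "EC X Y"
proof (rule EC_if_Lindelof_preimages[OF Y(2) fibre])
  have "completely_regular_space Y" "t1_space Y"
    using Y(1) by (simp_all add: Tychonoff_space_def Hausdorff_imp_t1_space)
  then show "Lindelof_in X {x \<in> topspace X. f x \<in> C}"
    if "continuous_map X Y f" "closedin Y C" "c \<in> topspace Y" "c \<notin> C"
      and "\<not> Lindelof_in X {x \<in> topspace X. f x = c}" for f C c
    using I0_Lindelof_preimage[OF I0 _ _ that] by blast
qed

theorem theorem3p8:
  fixes X :: "'a topology" and Y :: "'b topology" and K :: "'k set"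
  assumes "Hausdorff_space X" and "Hausdorff_space Y"
    and "countably_compact_space X" and "\<not> compact_space X"
    and "linear_Lindelof_number_is X K" and "uncountable K"
    and "aleph0_K_compact Y K" and "C_closed Y"
  shows "((\<forall>f. continuous_map X Y f \<longrightarrow>
            compactin Y (f ` topspace X) \<and>
            (\<exists>c \<in> topspace Y. \<not> Lindelof_in X {x \<in> topspace X. f x = c})))
         \<and> (IC X \<and> G_delta_points Y \<longrightarrow> EC X Y)
         \<and> (I0 X \<and> Tychonoff_space Y \<and> G_delta_points Y \<longrightarrow> EC X Y)"
proof -
  have LL: "linear_Lindelof_bound X K"
    using assms(5) by (simp add: linear_Lindelof_number_is_def)
  have Y_t1: "t1_space Y"
    using assms(2) by (rule Hausdorff_imp_t1_space)
  have image: "compactin Y (f ` topspace X)" if f: "continuous_map X Y f" for f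
    using compactin_image_linear_Lindelof[OF assms(3) LL assms(7,8) f] .
  have fibre: "\<exists>c\<in>topspace Y. \<not> Lindelof_in X {x \<in> topspace X. f x = c}"
    if f: "continuous_map X Y f" for f
    using non_Lindelof_fibre[OF assms(3,4) Y_t1 assms(8) f image[OF f]] .
  have "EC X Y" if "IC X" "G_delta_points Y"
    using EC_if_IC[OF that(1) Y_t1 that(2) fibre] .
  moreover have "EC X Y" if "I0 X" "Tychonoff_space Y" "G_delta_points Y"
    using EC_if_I0[OF that fibre] .
  ultimately show ?thesis
    using image fibre by blast
qed

end
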